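(* Let $0<\gamma<1$, $\alpha,\beta\in\mathbb{R}$, and let $(T_k)_{k=1}^\infty$ be a sequence of positive reals with $T_k\to\infty$. Assume that the sequence of empirical measures $(\delta^{T_k}_{A^+,\tau_{\alpha,\beta}\Gamma})_{k=1}^\infty$ exhibits $\gamma$-escape of mass, i.e. \[ \limsup_{k\to\infty}\delta^{T_k}_{A^+,\tau_{\alpha,\beta}\Gamma}(K)\leq 1-\gamma \] for every compact subset $K\subset X$. Then for any $0<\varepsilon<1/2$, \[ \liminf_{k\to\infty}\frac{(\log T_k)^2}{T_k^2}\left|\left\{n\in\mathbb{N}\ \middle|\ n<e^{2T_k},\ n\langle n\alpha\rangle\langle n\beta\rangle<\varepsilon\right\}\right|\geq\frac{\gamma}{18}. \]
   Context: $G=\mathrm{SL}(3,\mathbb{R})$, $\Gamma=\mathrm{SL}(3,\mathbb{Z})$, $X=G/\Gamma$, with $G$ acting by left multiplication. For $s,t\in\mathbb{R}$, $a_{s,t}=\mathrm{diag}(e^{-s-t},e^s,e^t)$, and $A^+=\{a_{s,t}: s,t\ge 0\}$. For $x\in X$ and $T>0$, the empirical measure is $\delta^T_{A^+,x}=\frac{1}{T^2}\int_{[0,T]^2}\delta_{a_{s,t}x}\,ds\,dt$. For $(\alpha,\beta)\in\mathbb{R}^2$, $\tau_{\alpha,\beta}$ is the lower triangular unipotent matrix with first column $(1,\alpha,\beta)^t$ and other columns $(0,1,0)^t,(0,0,1)^t$. $\langle x\rangle$ denotes the distance from $x\in\mathbb{R}$ to the nearest integer. *)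

theory Defs
  imports "HOL-Analysis.Analysis"
begin

type_synonym mat3 = "real^3^3"

definition SL3R :: "mat3 set" where
  "SL3R = {g. det g = 1}"

definition SL3Z :: "mat3 set" where
  "SL3Z = {g. det g = 1 \<and> (\<forall>i j. g $ i $ j \<in> \<int>)}"

definition coset :: "mat3 \<Rightarrow> mat3 set" where
  "coset g = (\<lambda>h. g ** h) ` SL3Z"

definition Xspace :: "mat3 set set" where
  "Xspace = coset ` SL3R"

definition X_top :: "mat3 set topology" where
  "X_top = topology (\<lambda>U. U \<subseteq> Xspace \<and> openin (top_of_set SL3R) {g \<in> SL3R. coset g \<in> U})"


lemma istopology_X_top:
  "istopology (\<lambda>U. U \<subseteq> Xspace \<and> openin (top_of_set SL3R) {g \<in> SL3R. coset g \<in> U})"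
  unfolding istopology_def
proof (rule conjI; intro allI impI ballI)
  fix S T assume "S \<subseteq> Xspace \<and> openin (top_of_set SL3R) {g \<in> SL3R. coset g \<in> S}"
    and "T \<subseteq> Xspace \<and> openin (top_of_set SL3R) {g \<in> SL3R. coset g \<in> T}"
  moreover have "{g \<in> SL3R. coset g \<in> S \<inter> T} = {g \<in> SL3R. coset g \<in> S} \<inter> {g \<in> SL3R. coset g \<in> T}" by auto
  ultimately show "S \<inter> T \<subseteq> Xspace \<and> openin (top_of_set SL3R) {g \<in> SL3R. coset g \<in> S \<inter> T}" by (auto intro: openin_Int)
next
  fix K assume H: "\<forall>U\<in>K. U \<subseteq> Xspace \<and> openin (top_of_set SL3R) {g \<in> SL3R. coset g \<in> U}"
  have "{g \<in> SL3R. coset g \<in> \<Union>K} = (\<Union>U\<in>K. {g \<in> SL3R. coset g \<in> U})" by auto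
  moreover have "openin (top_of_set SL3R) (\<Union>U\<in>K. {g \<in> SL3R. coset g \<in> U})"
    using H by (intro openin_Union) auto
  ultimately show "\<Union>K \<subseteq> Xspace \<and> openin (top_of_set SL3R) {g \<in> SL3R. coset g \<in> \<Union>K}" using H by auto
qed

definition act :: "mat3 \<Rightarrow> mat3 set \<Rightarrow> mat3 set" where
  "act a x = (\<Union>h\<in>x. {a ** h})"

definition a_st :: "real \<Rightarrow> real \<Rightarrow> mat3" where
  "a_st s t = vector [vector [exp (-s-t), 0, 0], vector [0, exp s, 0], vector [0, 0, exp t]]"

definition tau :: "real \<Rightarrow> real \<Rightarrow> mat3" where
  "tau \<alpha> \<beta> = vector [vector [1, 0, 0], vector [\<alpha>, 1, 0], vector [\<beta>, 0, 1]]"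

definition emp_measure :: "real \<Rightarrow> mat3 set \<Rightarrow> mat3 set set \<Rightarrow> real" where
  "emp_measure T x K =
     measure lborel {p :: real \<times> real. p \<in> {0..T} \<times> {0..T} \<and> act (a_st (fst p) (snd p)) x \<in> K} / T^2"

definition dni :: "real \<Rightarrow> real" where
  "dni x = \<bar>x - of_int (round x)\<bar>"

end

theory Submission
  imports Defs
begin

(* If a_{s,t} tau Gamma lies outside the compact set of cosets g Gamma with det g = 1 and all
   entries of g at most 3/eps^2, then by a quantitative Mahler criterion (proved via a reduced
   basis) the lattice a_{s,t} tau Z^3 contains a nonzero vector
   (e^(-s-t) m, e^s (m alpha + m'), e^t (m beta + m'')) of length less than eps. With n = |m|
   this puts n into the counting set and (s, t) into the triangle
   s <= ln (eps / <n alpha>), t <= ln (eps / <n beta>), s + t >= ln (n / eps).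
   By escape of mass these triangles cover at least a (gamma - o(1))-proportion of [0, T]^2.
   Either every triangle has legs of length at most 6 ln T, hence area at most 18 (ln T)^2,
   which gives the bound; or some triangle is wider, which forces n <n alpha> <n beta> < eps T^-6,
   and then all multiples k n with k <= T^2 are counted as well. *)

section \<open>Reduced bases of lattices in \<open>\<real>\<^sup>3\<close>\<close>

definition Ints_vec :: "(real^'n) set" where
  "Ints_vec = {u. \<forall>i. u $ i \<in> \<int>}"

lemma Ints_vec_add: "u \<in> Ints_vec \<Longrightarrow> v \<in> Ints_vec \<Longrightarrow> u + v \<in> Ints_vec"
  and Ints_vec_uminus: "u \<in> Ints_vec \<Longrightarrow> - u \<in> Ints_vec"
  and Ints_vec_scaleR: "k \<in> \<int> \<Longrightarrow> u \<in> Ints_vec \<Longrightarrow> k *\<^sub>R u \<in> Ints_vec"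
  unfolding Ints_vec_def by auto

lemma Ints_vec_cross3: "u \<in> Ints_vec \<Longrightarrow> v \<in> Ints_vec \<Longrightarrow> cross3 u v \<in> Ints_vec"
  unfolding Ints_vec_def by (auto simp: cross_components forall_3)

lemma finite_Ints_vec_norm_le: "finite {u :: real^'n. u \<in> Ints_vec \<and> norm u \<le> r}"
proof -
  define I where "I = {-\<lceil>r\<rceil>..\<lceil>r\<rceil>}"
  have "{u :: real^'n. u \<in> Ints_vec \<and> norm u \<le> r} \<subseteq> (\<lambda>f. \<chi> i. of_int (f i)) ` (UNIV \<rightarrow>\<^sub>E I)"
  proof
    fix u :: "real^'n" assume u: "u \<in> {u. u \<in> Ints_vec \<and> norm u \<le> r}"
    have ui: "u $ i = of_int \<lfloor>u $ i\<rfloor>" for i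
      using u unfolding Ints_vec_def by (auto elim: Ints_cases)
    have "\<bar>u $ i\<bar> \<le> r" for i
      using u component_le_norm_cart[of u i] by auto
    then have "\<bar>real_of_int \<lfloor>u $ i\<rfloor>\<bar> \<le> of_int \<lceil>r\<rceil>" for i
      using ui[of i] le_of_int_ceiling[of r] by (smt (verit))
    then have "\<lfloor>u $ i\<rfloor> \<in> I" for i
      unfolding I_def by (metis abs_le_iff atLeastAtMost_iff minus_le_iff of_int_abs of_int_le_iff)
    moreover have "u = (\<chi> i. of_int \<lfloor>u $ i\<rfloor>)"
      using ui by (simp add: vec_eq_iff)
    ultimately show "u \<in> (\<lambda>f. \<chi> i. of_int (f i)) ` (UNIV \<rightarrow>\<^sub>E I)"
      by (intro image_eqI[where x = "\<lambda>i. \<lfloor>u $ i\<rfloor>"]) auto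
  qed
  moreover have "finite (UNIV \<rightarrow>\<^sub>E I :: ('n \<Rightarrow> int) set)"
    unfolding I_def by (intro finite_PiE) auto
  ultimately show ?thesis
    using finite_subset by blast
qed

definition minimizers :: "('a \<Rightarrow> 'b::linorder) \<Rightarrow> 'a set \<Rightarrow> 'a set" where
  "minimizers f S = {x \<in> S. \<forall>y \<in> S. f x \<le> f y}"

lemma minimizers_subset: "minimizers f S \<subseteq> S"
  unfolding minimizers_def by auto

lemma minimizers_le: "x \<in> minimizers f S \<Longrightarrow> y \<in> S \<Longrightarrow> f x \<le> f y"
  unfolding minimizers_def by auto

lemma minimizers_eqI: "x \<in> minimizers f S \<Longrightarrow> y \<in> S \<Longrightarrow> f y = f x \<Longrightarrow> y \<in> minimizers f S"
  unfolding minimizers_def by auto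

lemma minimizers_nonempty:
  assumes "S \<noteq> {}" and finite_sublevels: "\<And>c. finite (f ` {x \<in> S. f x \<le> c})"
  shows "minimizers f S \<noteq> {}"
proof -
  obtain x0 where x0: "x0 \<in> S"
    using assms(1) by auto
  define V where "V = f ` {x \<in> S. f x \<le> f x0}"
  have "finite V" "V \<noteq> {}"
    unfolding V_def using finite_sublevels x0 by auto
  then have "Min V \<in> V" "\<And>v. v \<in> V \<Longrightarrow> Min V \<le> v"
    by simp_all
  then obtain x where x: "x \<in> S" "f x \<le> f x0" "\<And>y. y \<in> S \<Longrightarrow> f y \<le> f x0 \<Longrightarrow> f x \<le> f y"
    unfolding V_def by fastforce
  have "f x \<le> f y" if "y \<in> S" for y
    using x(2) x(3)[OF that] by (meson le_cases order_trans)
  then have "x \<in> minimizers f S"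
    unfolding minimizers_def using x(1) by blast
  then show ?thesis
    by auto
qed

lemma minimizers_norm_nonempty:
  fixes A :: "real^'n^'m"
  assumes "S \<noteq> {}" and "inj ((*v) A)"
    and f: "\<And>t. t \<in> S \<Longrightarrow> w t \<in> Ints_vec \<and> f t = norm (A *v w t)"
  shows "minimizers f S \<noteq> {}"
proof (rule minimizers_nonempty[OF assms(1)])
  fix c
  obtain B where B: "B > 0" "\<And>u. B * norm u \<le> norm (A *v u)"
    using linear_inj_bounded_below_pos[OF matrix_vector_mul_linear assms(2)] by blast
  have "f ` {t \<in> S. f t \<le> c} \<subseteq> (\<lambda>u. norm (A *v u)) ` {u. u \<in> Ints_vec \<and> norm u \<le> c / B}"
  proof
    fix y assume "y \<in> f ` {t \<in> S. f t \<le> c}"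
    then obtain t where t: "t \<in> S" "f t \<le> c" "y = f t"
      by auto
    have "B * norm (w t) \<le> c"
      using B(2)[of "w t"] f[OF t(1)] t(2) by linarith
    then have "norm (w t) \<le> c / B"
      using B(1) by (simp add: field_simps)
    then show "y \<in> (\<lambda>u. norm (A *v u)) ` {u. u \<in> Ints_vec \<and> norm u \<le> c / B}"
      using f[OF t(1)] t(3) by auto
  qed
  then show "finite (f ` {t \<in> S. f t \<le> c})"
    using finite_Ints_vec_norm_le finite_subset by blast
qed

fun lex_minimizers :: "('a \<Rightarrow> 'b::linorder) list \<Rightarrow> 'a set \<Rightarrow> 'a set" where
  "lex_minimizers [] S = S"
| "lex_minimizers (f # fs) S = lex_minimizers fs (minimizers f S)"

lemma lex_minimizers_subset: "lex_minimizers fs S \<subseteq> S"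
proof (induction fs arbitrary: S)
  case (Cons f fs)
  then show ?case
    using minimizers_subset[of f S] by (metis lex_minimizers.simps(2) order_trans)
qed simp

lemma lex_minimizers_le:
  assumes "x \<in> lex_minimizers fs S" "y \<in> S" "i < length fs"
    and "map (\<lambda>g. g y) (take i fs) = map (\<lambda>g. g x) (take i fs)"
  shows "(fs ! i) x \<le> (fs ! i) y"
  using assms
proof (induction fs arbitrary: S i)
  case (Cons f fs)
  have x: "x \<in> lex_minimizers fs (minimizers f S)"
    using Cons.prems(1) by simp
  then have x_min: "x \<in> minimizers f S"
    by (rule subsetD[OF lex_minimizers_subset])
  show ?case
  proof (cases i)
    case 0
    then show ?thesis
      using minimizers_le[OF x_min Cons.prems(2)] by simp
  next
    case (Suc j)
    then have "f y = f x" "map (\<lambda>g. g y) (take j fs) = map (\<lambda>g. g x) (take j fs)"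
      using Cons.prems(4) by simp_all
    moreover have "y \<in> minimizers f S"
      using minimizers_eqI[OF x_min Cons.prems(2)] \<open>f y = f x\<close> by blast
    ultimately show ?thesis
      using Cons.IH[OF x] Cons.prems(3) Suc by simp
  qed
qed simp

lemma lex_minimizers_nonempty:
  assumes "S \<noteq> {}" and "\<And>f S'. f \<in> set fs \<Longrightarrow> S' \<subseteq> S \<Longrightarrow> S' \<noteq> {} \<Longrightarrow> minimizers f S' \<noteq> {}"
  shows "lex_minimizers fs S \<noteq> {}"
  using assms
proof (induction fs arbitrary: S)
  case (Cons f fs)
  have "lex_minimizers fs (minimizers f S) \<noteq> {}"
  proof (rule Cons.IH)
    show "minimizers f S \<noteq> {}"
      using Cons.prems(1) Cons.prems(2)[of f S] by simp
    fix g S' assume "g \<in> set fs" "S' \<subseteq> minimizers f S" "S' \<noteq> {}"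
    then show "minimizers g S' \<noteq> {}"
      using Cons.prems(2)[of g S'] minimizers_subset[of f S] by auto
  qed
  then show ?case
    by simp
qed simp

lemma two_abs_inner_le_norm_sq:
  fixes v w :: "'a::real_inner"
  assumes "norm v \<le> norm (v + w)" and "norm v \<le> norm (v - w)"
  shows "2 * \<bar>v \<bullet> w\<bar> \<le> (norm w)^2"
proof -
  have "(norm v)^2 \<le> (norm (v + w))^2" "(norm v)^2 \<le> (norm (v - w))^2"
    using assms by (auto intro: power_mono)
  then show ?thesis
    by (simp add: power2_norm_eq_inner inner_add_left inner_add_right inner_diff_left
        inner_diff_right inner_commute[of w v] abs_le_iff)
qed

lemma exists_Ints_shift_norm_sq_le:
  fixes c n :: "'a::real_inner"
  assumes "n \<noteq> 0"
  obtains l where "l \<in> \<int>"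
    "(norm (c + l *\<^sub>R n))^2 * (norm n)^2 \<le> (norm c)^2 * (norm n)^2 - (c \<bullet> n)^2 + (norm n)^4 / 4"
proof
  define A where "A = (norm n)^2"
  define l :: real where "l = - of_int (round ((c \<bullet> n) / A))"
  have A: "A > 0"
    unfolding A_def using assms by simp
  show "l \<in> \<int>"
    unfolding l_def by simp
  have x: "\<bar>(c \<bullet> n) / A + l\<bar> \<le> 1/2"
    unfolding l_def using of_int_round_abs_le[of "(c \<bullet> n) / A"] by linarith
  have "((c \<bullet> n) / A + l)^2 \<le> (1/2)^2"
    using x by (metis abs_ge_zero power2_abs power_mono)
  then have "A^2 * ((c \<bullet> n) / A + l)^2 \<le> A^2 * (1/2)^2"
    by (rule mult_left_mono) simp
  moreover have "(norm (c + l *\<^sub>R n))^2 * A = (norm c)^2 * A - (c \<bullet> n)^2 + A^2 * ((c \<bullet> n) / A + l)^2"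
    using A unfolding A_def power2_norm_eq_inner
    by (simp add: inner_add_left inner_add_right inner_commute field_simps power2_eq_square)
  ultimately show "(norm (c + l *\<^sub>R n))^2 * (norm n)^2 \<le> (norm c)^2 * (norm n)^2 - (c \<bullet> n)^2 + (norm n)^4 / 4"
    unfolding A_def by (simp add: power2_eq_square power4_eq_xxxx)
qed

lemma exists_Ints_shift_norm_le:
  fixes v w b1 b2 :: "'a::real_normed_vector"
  assumes "v = w + x *\<^sub>R b1 + y *\<^sub>R b2"
  obtains k l where "k \<in> \<int>" "l \<in> \<int>" "norm (v + k *\<^sub>R b1 + l *\<^sub>R b2) \<le> norm w + norm b1 / 2 + norm b2 / 2"
proof
  define k :: real where "k = - of_int (round x)"
  define l :: real where "l = - of_int (round y)"
  show "k \<in> \<int>" "l \<in> \<int>"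
    unfolding k_def l_def by simp_all
  have "\<bar>x + k\<bar> \<le> 1/2" "\<bar>y + l\<bar> \<le> 1/2"
    unfolding k_def l_def using of_int_round_abs_le[of x] of_int_round_abs_le[of y] by linarith+
  then have "\<bar>x + k\<bar> * norm b1 + \<bar>y + l\<bar> * norm b2 \<le> 1/2 * norm b1 + 1/2 * norm b2"
    by (intro add_mono mult_right_mono) auto
  moreover have "norm (v + k *\<^sub>R b1 + l *\<^sub>R b2) \<le> norm w + \<bar>x + k\<bar> * norm b1 + \<bar>y + l\<bar> * norm b2"
  proof -
    have "v + k *\<^sub>R b1 + l *\<^sub>R b2 = w + (x + k) *\<^sub>R b1 + (y + l) *\<^sub>R b2"
      using assms by (simp add: algebra_simps)
    then show ?thesis
      by (metis norm_scaleR norm_triangle_le norm_triangle_ineq add_mono order_refl)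
  qed
  ultimately show "norm (v + k *\<^sub>R b1 + l *\<^sub>R b2) \<le> norm w + norm b1 / 2 + norm b2 / 2"
    by linarith
qed

lemma cross3_basis_expansion:
  fixes b1 b2 b3 :: "real^3"
  defines "n \<equiv> cross3 b1 b2"
  shows "(n \<bullet> n) *\<^sub>R b3 = (b3 \<bullet> n) *\<^sub>R n + (cross3 b3 b2 \<bullet> n) *\<^sub>R b1 + (cross3 b1 b3 \<bullet> n) *\<^sub>R b2"
  unfolding n_def by (simp add: cross3_simps) (metis exhaust_3)

lemma cross3_cross3_common_left:
  "cross3 (cross3 b1 b3) (cross3 b1 b2) = - ((b1 \<bullet> cross3 b2 b3) *\<^sub>R b1)"
  by (simp add: cross3_simps) (metis exhaust_3)

definition reduced_triple :: "real^3 \<Rightarrow> real^3 \<Rightarrow> real^3 \<Rightarrow> bool" where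
  "reduced_triple b1 b2 b3 \<longleftrightarrow>
     norm b1 \<le> norm b2 \<and>
     (\<forall>k \<in> \<int>. norm b2 \<le> norm (b2 + k *\<^sub>R b1)) \<and>
     (\<forall>l \<in> \<int>. norm (cross3 b1 b2) \<le> norm (cross3 b1 (b3 + l *\<^sub>R b2))) \<and>
     (\<forall>k \<in> \<int>. \<forall>l \<in> \<int>. norm b3 \<le> norm (b3 + k *\<^sub>R b1 + l *\<^sub>R b2))"

text \<open>Here \<open>a = |b1|\<^sup>2\<close>, \<open>B = |b2|\<^sup>2\<close>, \<open>d = b1 \<bullet> b2\<close> and \<open>A = |b1 \<times> b2|\<^sup>2\<close> are the Gram data of
  a reduced basis \<open>b1, b2, b3\<close> of covolume 1.\<close>
lemma reduced_gram_bounds: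
  fixes a B d A :: real
  assumes a_pos: "0 < a" and aB: "a \<le> B" and d: "2 * \<bar>d\<bar> \<le> a"
    and A: "A = a * B - d^2" and A_sq: "3/4 * A^2 \<le> a"
  shows "3/4 * a^2 \<le> A" "a \<le> 4/3" "B \<le> 4/3 * (1/a) + a/4"
proof -
  have "\<bar>d\<bar>^2 \<le> (a/2)^2"
    using d by (intro power_mono) auto
  then have d_sq: "d^2 \<le> (a/2)^2"
    by simp
  have "a * a \<le> a * B"
    using aB a_pos by (intro mult_left_mono) auto
  then show A_ge: "3/4 * a^2 \<le> A"
    using d_sq unfolding A by (simp add: power2_eq_square)
  have "(3/4 * a^2)^2 \<le> A^2"
    using A_ge a_pos by (intro power_mono) auto
  then have "27/64 * a^3 * a \<le> 1 * a"
    using A_sq by (simp add: power2_eq_square power3_eq_cube algebra_simps)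
  then have "27/64 * a^3 \<le> 1"
    using a_pos by (meson mult_le_cancel_right_pos)
  moreover have "(4/3 :: real)^3 = 64/27"
    by (simp add: power3_eq_cube)
  ultimately have "a^3 \<le> (4/3)^3"
    by linarith
  then show a_le: "a \<le> 4/3"
    using power_strict_mono[of "4/3" a 3] by fastforce
  then have "A^2 \<le> (4/3)^2"
    using A_sq by (simp add: power2_eq_square)
  then have "A \<le> 4/3"
    by (rule power2_le_imp_le) simp
  have "B = (A + d^2) / a"
    using A a_pos by (simp add: field_simps)
  also have "\<dots> \<le> (4/3 + a^2/4) / a"
    using \<open>A \<le> 4/3\<close> d_sq a_pos by (intro divide_right_mono) (auto simp: power_divide)
  also have "\<dots> = 4/3 * (1/a) + a/4"
    using a_pos by (simp add: field_simps power2_eq_square)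
  finally show "B \<le> 4/3 * (1/a) + a/4" .
qed

lemma sum_sq_le_three_sum_sq: "(x + y + z)^2 \<le> 3 * (x^2 + y^2 + z^2)" for x y z :: real
proof -
  have "3 * (x^2 + y^2 + z^2) - (x + y + z)^2 = (x - y)^2 + (y - z)^2 + (x - z)^2"
    by (simp add: power2_eq_square algebra_simps)
  then show ?thesis
    by (smt (verit) zero_le_power2)
qed

lemma cross3_ne_0_of_volume: "b1 \<bullet> cross3 b2 b3 = 1 \<Longrightarrow> cross3 b1 b2 \<noteq> 0"
  using cross_triple[of b1 b2 b3] by (auto simp: inner_commute)

lemma reduced_triple_inner_le:
  assumes "reduced_triple b1 b2 b3"
  shows "2 * \<bar>b2 \<bullet> b1\<bar> \<le> (norm b1)^2"
proof (rule two_abs_inner_le_norm_sq)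
  have "\<forall>k \<in> \<int>. norm b2 \<le> norm (b2 + k *\<^sub>R b1)"
    using assms unfolding reduced_triple_def by blast
  then have "norm b2 \<le> norm (b2 + 1 *\<^sub>R b1)" "norm b2 \<le> norm (b2 + (-1) *\<^sub>R b1)"
    by (meson Ints_1 Ints_minus)+
  then show "norm b2 \<le> norm (b2 + b1)" "norm b2 \<le> norm (b2 - b1)"
    by simp_all
qed

lemma reduced_triple_area_le:
  assumes red: "reduced_triple b1 b2 b3" and vol: "b1 \<bullet> cross3 b2 b3 = 1"
  shows "3/4 * ((norm (cross3 b1 b2))^2)^2 \<le> (norm b1)^2"
proof -
  define n where "n = cross3 b1 b2"
  define c where "c = cross3 b1 b3"
  define A where "A = (norm n)^2"
  have n_ne: "n \<noteq> 0"
    unfolding n_def using vol by (rule cross3_ne_0_of_volume)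
  have "cross3 c n = - b1"
    unfolding c_def n_def using cross3_cross3_common_left[of b1 b3 b2] vol by simp
  then have c_n: "(norm c)^2 * A - (c \<bullet> n)^2 = (norm b1)^2"
    unfolding A_def using norm_cross[of c n] by simp
  have "(norm n)^4 = A^2"
    unfolding A_def by simp
  then obtain l where l: "l \<in> \<int>" "(norm (c + l *\<^sub>R n))^2 * A \<le> (norm c)^2 * A - (c \<bullet> n)^2 + A^2 / 4"
    using exists_Ints_shift_norm_sq_le[OF n_ne, of c] unfolding A_def by metis
  have "norm n \<le> norm (c + l *\<^sub>R n)"
    using red l(1) unfolding reduced_triple_def c_def n_def by (simp add: cross_add_right cross_mult_right)
  then have "A * A \<le> (norm (c + l *\<^sub>R n))^2 * A"
    unfolding A_def by (intro mult_right_mono power_mono) auto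
  then show ?thesis
    using l(2) c_n unfolding A_def n_def by (simp add: power2_eq_square)
qed

lemma reduced_triple_third_le:
  assumes red: "reduced_triple b1 b2 b3" and vol: "b1 \<bullet> cross3 b2 b3 = 1"
  shows "(norm b3)^2 \<le> 3 * (1 / (norm (cross3 b1 b2))^2 + (norm b1)^2/4 + (norm b2)^2/4)"
proof -
  define n where "n = cross3 b1 b2"
  define A where "A = (norm n)^2"
  have n_ne: "n \<noteq> 0"
    unfolding n_def using vol by (rule cross3_ne_0_of_volume)
  have "n \<bullet> b3 = 1"
    unfolding n_def using vol cross_triple[of b1 b2 b3] by (simp add: inner_commute)
  then have "b3 = (1/A) *\<^sub>R n + ((cross3 b3 b2 \<bullet> n) / A) *\<^sub>R b1 + ((cross3 b1 b3 \<bullet> n) / A) *\<^sub>R b2"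
    using arg_cong[OF cross3_basis_expansion[of b1 b2 b3], of "scaleR (1/A)"] n_ne
    unfolding A_def n_def by (simp add: power2_norm_eq_inner inner_commute scaleR_add_right)
  then obtain k l where "k \<in> \<int>" "l \<in> \<int>"
    "norm (b3 + k *\<^sub>R b1 + l *\<^sub>R b2) \<le> norm ((1/A) *\<^sub>R n) + norm b1 / 2 + norm b2 / 2"
    by (rule exists_Ints_shift_norm_le)
  then have "norm b3 \<le> norm n / A + norm b1 / 2 + norm b2 / 2"
    using red unfolding reduced_triple_def A_def by fastforce
  then have "(norm b3)^2 \<le> (norm n / A + norm b1 / 2 + norm b2 / 2)^2"
    by (intro power_mono) auto
  also have "\<dots> \<le> 3 * ((norm n / A)^2 + (norm b1 / 2)^2 + (norm b2 / 2)^2)"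
    by (rule sum_sq_le_three_sum_sq)
  finally show ?thesis
    using n_ne unfolding A_def n_def by (simp add: power_divide power2_eq_square)
qed

lemma reduced_triple_norm_le:
  fixes b1 b2 b3 :: "real^3"
  assumes red: "reduced_triple b1 b2 b3" and vol: "b1 \<bullet> cross3 b2 b3 = 1"
    and \<delta>: "0 < \<delta>" "\<delta> \<le> 1" "\<delta> \<le> norm b1"
  shows "norm b1 \<le> 3/\<delta>^2 \<and> norm b2 \<le> 3/\<delta>^2 \<and> norm b3 \<le> 3/\<delta>^2"
proof -
  define a where "a = (norm b1)^2"
  define A where "A = (norm (cross3 b1 b2))^2"
  define D where "D = 1/\<delta>^2"
  have a: "\<delta>^2 \<le> a" "a \<le> (norm b2)^2"
    unfolding a_def using \<delta> red unfolding reduced_triple_def by (auto intro: power_mono)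
  then have a_pos: "0 < a"
    using \<delta>(1) by (smt (verit) zero_less_power)
  have "2 * \<bar>b2 \<bullet> b1\<bar> \<le> a"
    unfolding a_def using red by (rule reduced_triple_inner_le)
  moreover have "A = a * (norm b2)^2 - (b2 \<bullet> b1)^2"
    unfolding A_def a_def norm_cross by (simp add: inner_commute)
  moreover have "3/4 * A^2 \<le> a"
    unfolding a_def A_def using red vol by (rule reduced_triple_area_le)
  ultimately have gram: "3/4 * a^2 \<le> A" "a \<le> 4/3" "(norm b2)^2 \<le> 4/3 * (1/a) + a/4"
    using reduced_gram_bounds[OF a_pos a(2)] by blast+
  have D: "1 \<le> D" "1/a \<le> D" "(3/\<delta>^2)^2 = 9 * D^2"
    unfolding D_def using \<delta> power_le_one[of \<delta> 2] a a_pos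
    by (auto simp: divide_left_mono power2_eq_square)
  have "\<delta>^4 = (\<delta>^2)^2"
    by simp
  also have "\<dots> \<le> a^2"
    using a \<delta> by (intro power_mono) auto
  finally have A: "3/4 * \<delta>^4 \<le> A"
    using gram(1) by linarith
  moreover have \<delta>4: "0 < 3/4 * \<delta>^4"
    using \<delta> by simp
  ultimately have "0 < A * (3/4 * \<delta>^4)"
    by (intro mult_pos_pos) linarith+
  with A have "1/A \<le> 1/(3/4 * \<delta>^4)"
    by (intro divide_left_mono) simp_all
  then have "1/A \<le> 4/3 * D^2"
    unfolding D_def by (simp add: power2_eq_square power4_eq_xxxx)
  moreover have "D \<le> D^2"
    using D(1) mult_left_mono[of 1 D D] by (simp add: power2_eq_square)
  moreover have "1 \<le> D^2"
    using D(1) by (simp add: one_le_power)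
  ultimately have "a \<le> (3/\<delta>^2)^2 \<and> (norm b2)^2 \<le> (3/\<delta>^2)^2 \<and> (norm b3)^2 \<le> (3/\<delta>^2)^2"
    unfolding D(3) using gram(2,3) D(2) reduced_triple_third_le[OF red vol]
    unfolding a_def[symmetric] A_def[symmetric] by (intro conjI) argo+
  then show ?thesis
    unfolding a_def using power2_le_imp_le[of _ "3/\<delta>^2"] by simp
qed

lemma cross3_matrix_vector_mult:
  fixes M :: "real^3^3"
  assumes "det M = 1"
  obtains N where "invertible N" "\<And>x y. cross3 (M *v x) (M *v y) = N *v cross3 x y"
proof -
  obtain N where N: "N ** transpose M = mat 1" "transpose M ** N = mat 1"
    using assms by (metis invertible_def invertible_det_nz det_transpose zero_neq_one)
  have "cross3 (M *v x) (M *v y) = N *v (transpose M *v cross3 (M *v x) (M *v y))" for x y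
    by (simp only: matrix_vector_mul_assoc N(1) matrix_vector_mul_lid)
  then have "cross3 (M *v x) (M *v y) = N *v cross3 x y" for x y
    by (simp only: cross_matrix_mult assms scaleR_one)
  moreover have "invertible N"
    using N unfolding invertible_def by blast
  ultimately show ?thesis
    using that by blast
qed

definition unimodular_triples :: "((real^3) \<times> (real^3) \<times> (real^3)) set" where
  "unimodular_triples =
     {(u1, u2, u3). u1 \<in> Ints_vec \<and> u2 \<in> Ints_vec \<and> u3 \<in> Ints_vec \<and> u1 \<bullet> cross3 u2 u3 = 1}"

text \<open>A basis \<open>M u1, M u2, M u3\<close> of the lattice \<open>M \<int>\<^sup>3\<close> is reduced once \<open>(u1, u2, u3)\<close>
  minimises these quantities lexicographically.\<close>
definition reduction_norms :: "real^3^3 \<Rightarrow> ((real^3) \<times> (real^3) \<times> (real^3) \<Rightarrow> real) list" where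
  "reduction_norms M =
     [\<lambda>(u1, u2, u3). norm (M *v u1), \<lambda>(u1, u2, u3). norm (cross3 (M *v u1) (M *v u2)),
      \<lambda>(u1, u2, u3). norm (M *v u2), \<lambda>(u1, u2, u3). norm (M *v u3)]"

lemma lex_minimizers_reduction_norms_nonempty:
  assumes "det M = 1"
  shows "lex_minimizers (reduction_norms M) unimodular_triples \<noteq> {}"
proof (rule lex_minimizers_nonempty)
  have "axis i 1 \<in> Ints_vec" for i :: 3
    unfolding Ints_vec_def axis_def by simp
  then have "(axis 1 1, axis 2 1, axis 3 1) \<in> unimodular_triples"
    unfolding unimodular_triples_def by (simp add: cross_basis inner_axis_axis)
  then show "unimodular_triples \<noteq> {}"
    by blast
  obtain N where N: "invertible N" "\<And>x y. cross3 (M *v x) (M *v y) = N *v cross3 x y"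
    using cross3_matrix_vector_mult[OF assms] by blast
  have inj: "inj ((*v) M)" "inj ((*v) N)"
    using assms N(1) by (simp_all add: inj_matrix_vector_mult invertible_det_nz)
  fix f S assume f: "f \<in> set (reduction_norms M)" and S: "S \<subseteq> unimodular_triples" "S \<noteq> {}"
  have Ints: "fst t \<in> Ints_vec" "fst (snd t) \<in> Ints_vec" "snd (snd t) \<in> Ints_vec" if "t \<in> S" for t
    using S(1) that unfolding unimodular_triples_def by auto
  have "minimizers (\<lambda>(u1, u2, u3). norm (M *v u1)) S \<noteq> {}"
    by (rule minimizers_norm_nonempty[OF S(2) inj(1), where w = fst]) (simp add: Ints case_prod_unfold)
  moreover have "minimizers (\<lambda>(u1, u2, u3). norm (cross3 (M *v u1) (M *v u2))) S \<noteq> {}"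
    by (rule minimizers_norm_nonempty[OF S(2) inj(2), where w = "\<lambda>t. cross3 (fst t) (fst (snd t))"])
      (simp add: Ints Ints_vec_cross3 N(2) case_prod_unfold)
  moreover have "minimizers (\<lambda>(u1, u2, u3). norm (M *v u2)) S \<noteq> {}"
    by (rule minimizers_norm_nonempty[OF S(2) inj(1), where w = "\<lambda>t. fst (snd t)"])
      (simp add: Ints case_prod_unfold)
  moreover have "minimizers (\<lambda>(u1, u2, u3). norm (M *v u3)) S \<noteq> {}"
    by (rule minimizers_norm_nonempty[OF S(2) inj(1), where w = "\<lambda>t. snd (snd t)"])
      (simp add: Ints case_prod_unfold)
  ultimately show "minimizers f S \<noteq> {}"
    using f unfolding reduction_norms_def by auto
qed

lemma reduced_triple_if_lex_minimizer:
  assumes u: "(u1, u2, u3) \<in> lex_minimizers (reduction_norms M) unimodular_triples"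
  shows "reduced_triple (M *v u1) (M *v u2) (M *v u3)"
proof -
  have U: "(v1, v2, v3) \<in> unimodular_triples \<longleftrightarrow>
      v1 \<in> Ints_vec \<and> v2 \<in> Ints_vec \<and> v3 \<in> Ints_vec \<and> v1 \<bullet> cross3 v2 v3 = 1" for v1 v2 v3
    by (simp add: unimodular_triples_def)
  have "(u1, u2, u3) \<in> unimodular_triples"
    using u by (rule subsetD[OF lex_minimizers_subset])
  then have u_U: "u1 \<in> Ints_vec" "u2 \<in> Ints_vec" "u3 \<in> Ints_vec" "u1 \<bullet> cross3 u2 u3 = 1"
    by (simp_all add: U)
  note le = lex_minimizers_le[OF u, unfolded reduction_norms_def]
  have "u2 \<bullet> cross3 (- u1) u3 = u1 \<bullet> cross3 u2 u3"
    by (simp add: cross3_simps)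
  then have "norm (M *v u1) \<le> norm (M *v u2)"
    using le[of "(u2, - u1, u3)" 0] u_U by (simp add: U Ints_vec_uminus)
  moreover have "norm (M *v u2) \<le> norm (M *v u2 + k *\<^sub>R (M *v u1))" if "k \<in> \<int>" for k
    using le[of "(u1, u2 + k *\<^sub>R u1, u3)" 2] u_U that
    by (simp add: U Ints_vec_add Ints_vec_scaleR cross_add_left cross_mult_left cross_add_right
        cross_mult_right inner_add_right dot_cross_self matrix_vector_right_distrib matrix_vector_mult_scaleR)
  moreover have "norm (cross3 (M *v u1) (M *v u2)) \<le> norm (cross3 (M *v u1) (M *v u3 + l *\<^sub>R (M *v u2)))"
    if "l \<in> \<int>" for l
    using le[of "(u1, u3 + l *\<^sub>R u2, - u2)" 1] u_U that
    by (simp add: U Ints_vec_add Ints_vec_scaleR Ints_vec_uminus cross_add_left cross_mult_left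
        inner_add_right cross_skew[of u3 u2] matrix_vector_right_distrib matrix_vector_mult_scaleR)
  moreover have "norm (M *v u3) \<le> norm (M *v u3 + k *\<^sub>R (M *v u1) + l *\<^sub>R (M *v u2))"
    if "k \<in> \<int>" "l \<in> \<int>" for k l
    using le[of "(u1, u2, u3 + k *\<^sub>R u1 + l *\<^sub>R u2)" 3] u_U that
    by (simp add: U Ints_vec_add Ints_vec_scaleR cross_add_right cross_mult_right inner_add_right
        dot_cross_self matrix_vector_right_distrib matrix_vector_mult_scaleR)
  ultimately show ?thesis
    unfolding reduced_triple_def by (simp add: matrix_vector_right_distrib matrix_vector_mult_scaleR)
qed

lemma exists_reduced_basis:
  fixes M :: "real^3^3"
  assumes "det M = 1"
  obtains u1 u2 u3 where "u1 \<in> Ints_vec" "u2 \<in> Ints_vec" "u3 \<in> Ints_vec" "u1 \<bullet> cross3 u2 u3 = 1"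
    "reduced_triple (M *v u1) (M *v u2) (M *v u3)"
proof -
  obtain u1 u2 u3 where u: "(u1, u2, u3) \<in> lex_minimizers (reduction_norms M) unimodular_triples"
    using lex_minimizers_reduction_norms_nonempty[OF assms] by auto
  moreover have "(u1, u2, u3) \<in> unimodular_triples"
    using u by (rule subsetD[OF lex_minimizers_subset])
  ultimately show ?thesis
    using that reduced_triple_if_lex_minimizer unfolding unimodular_triples_def by blast
qed

section \<open>Unimodular lattices and compact subsets of \<open>X\<close>\<close>

definition columns3 :: "real^3 \<Rightarrow> real^3 \<Rightarrow> real^3 \<Rightarrow> real^3^3" where
  "columns3 a b c = transpose (vector [a, b, c])"

lemma det_columns3: "det (columns3 a b c) = a \<bullet> cross3 b c"
  unfolding columns3_def by (simp add: det_transpose dot_cross_det)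

lemma matrix_mult_columns3: "(A ** columns3 a b c) $ i $ j = (A *v (vector [a, b, c] $ j)) $ i"
  unfolding columns3_def
  by (simp add: matrix_matrix_mult_def matrix_vector_mult_def transpose_def)

lemma vector3_nth_cases: "(vector [a, b, c] :: 'a::zero^3) $ j \<in> {a, b, c}"
  using exhaust_3[of j] by auto

lemma columns3_Ints:
  assumes "a \<in> Ints_vec" "b \<in> Ints_vec" "c \<in> Ints_vec"
  shows "columns3 a b c $ i $ j \<in> \<int>"
proof -
  have "vector [a, b, c] $ j \<in> Ints_vec"
    using vector3_nth_cases[of a b c j] assms by auto
  then show ?thesis
    unfolding columns3_def Ints_vec_def by (simp add: transpose_def)
qed

lemma columns3_SL3Z:
  "a \<in> Ints_vec \<Longrightarrow> b \<in> Ints_vec \<Longrightarrow> c \<in> Ints_vec \<Longrightarrow> a \<bullet> cross3 b c = 1 \<Longrightarrow> columns3 a b c \<in> SL3Z"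
  unfolding SL3Z_def using columns3_Ints by (auto simp: det_columns3)

lemma SL3Z_mult:
  assumes "U \<in> SL3Z" "V \<in> SL3Z"
  shows "U ** V \<in> SL3Z"
proof -
  have "(U ** V) $ i $ j \<in> \<int>" for i j
    using assms unfolding SL3Z_def by (auto simp: matrix_matrix_mult_def intro!: Ints_sum Ints_mult)
  then show ?thesis
    using assms unfolding SL3Z_def by (simp add: det_mul)
qed

lemma SL3Z_mat_1: "mat 1 \<in> SL3Z"
  unfolding SL3Z_def using det_I[where 'a = real and 'n = 3] by (auto simp: mat_def)

text \<open>The inverse of a matrix with rows \<open>r1, r2, r3\<close> and determinant 1 has columns
  \<open>r2 \<times> r3, r3 \<times> r1, r1 \<times> r2\<close>.\<close>
lemma SL3Z_inverse:
  assumes "U \<in> SL3Z"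
  obtains V where "V \<in> SL3Z" "U ** V = mat 1"
proof
  let ?r1 = "U $ 1" and ?r2 = "U $ 2" and ?r3 = "U $ 3"
  define V where "V = columns3 (cross3 ?r2 ?r3) (cross3 ?r3 ?r1) (cross3 ?r1 ?r2)"
  have rows: "U $ i \<in> Ints_vec" for i
    using assms unfolding SL3Z_def Ints_vec_def by auto
  have "det U = ?r1 \<bullet> cross3 ?r2 ?r3"
    by (simp add: dot_cross_det det_3 vector_def)
  then have vol: "?r1 \<bullet> cross3 ?r2 ?r3 = 1"
    using assms unfolding SL3Z_def by simp
  have "(U ** V) $ i $ j = mat 1 $ i $ j" for i j
    unfolding V_def matrix_mult_columns3 mat_def
    using exhaust_3[of i] exhaust_3[of j] vol
    by (auto simp: matrix_vector_mult_def sum_3 dot_cross_self cross3_simps)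
  then show UV: "U ** V = mat 1"
    by (simp add: vec_eq_iff)
  have "det U * det V = 1"
    using UV by (metis det_mul det_I)
  then have "det V = 1"
    using assms unfolding SL3Z_def by simp
  moreover have "V $ i $ j \<in> \<int>" for i j
    unfolding V_def by (intro columns3_Ints Ints_vec_cross3 rows)
  ultimately show "V \<in> SL3Z"
    unfolding SL3Z_def by auto
qed

lemma coset_self: "g \<in> coset g"
  unfolding coset_def using SL3Z_mat_1 by (metis image_eqI matrix_mul_rid)

lemma coset_mult_SL3Z:
  assumes U: "U \<in> SL3Z"
  shows "coset (g ** U) = coset g"
proof
  show "coset (g ** U) \<subseteq> coset g"
  proof
    fix x assume "x \<in> coset (g ** U)"
    then obtain W where "W \<in> SL3Z" "x = g ** (U ** W)"
      unfolding coset_def by (auto simp: matrix_mul_assoc)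
    then show "x \<in> coset g"
      unfolding coset_def using SL3Z_mult[OF U] by blast
  qed
  obtain V where V: "V \<in> SL3Z" "U ** V = mat 1"
    using SL3Z_inverse[OF U] by blast
  show "coset g \<subseteq> coset (g ** U)"
  proof
    fix x assume "x \<in> coset g"
    then obtain W where W: "W \<in> SL3Z" "x = g ** W"
      unfolding coset_def by auto
    then have "x = (g ** U) ** (V ** W)"
      using V by (simp add: matrix_mul_assoc[symmetric] matrix_mul_assoc)
    then show "x \<in> coset (g ** U)"
      unfolding coset_def using SL3Z_mult[OF V(1) W(1)] by auto
  qed
qed

lemma act_coset: "act a (coset g) = coset (a ** g)"
  unfolding act_def coset_def by (auto simp: matrix_mul_assoc)

lemma coset_in_image_iff: "coset g \<in> coset ` C \<longleftrightarrow> (\<exists>U \<in> SL3Z. g ** U \<in> C)"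
proof
  assume "coset g \<in> coset ` C"
  then obtain c where c: "c \<in> C" "coset g = coset c"
    by auto
  then obtain U where "U \<in> SL3Z" "c = g ** U"
    using coset_self[of c] unfolding coset_def by auto
  then show "\<exists>U \<in> SL3Z. g ** U \<in> C"
    using c by auto
qed (metis coset_mult_SL3Z image_eqI)

definition SL3R_box :: "real \<Rightarrow> mat3 set" where
  "SL3R_box R = {h. det h = 1 \<and> (\<forall>i j. \<bar>h $ i $ j\<bar> \<le> R)}"

text \<open>A quantitative form of Mahler's compactness criterion.\<close>
lemma mahler_reduction:
  fixes M :: mat3
  assumes "det M = 1" and \<delta>: "0 < \<delta>" "\<delta> \<le> 1"
    and no_short: "\<And>u. u \<in> Ints_vec \<Longrightarrow> u \<noteq> 0 \<Longrightarrow> \<delta> \<le> norm (M *v u)"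
  shows "\<exists>U \<in> SL3Z. M ** U \<in> SL3R_box (3/\<delta>^2)"
proof -
  obtain u1 u2 u3 where u: "u1 \<in> Ints_vec" "u2 \<in> Ints_vec" "u3 \<in> Ints_vec" "u1 \<bullet> cross3 u2 u3 = 1"
    and red: "reduced_triple (M *v u1) (M *v u2) (M *v u3)"
    using exists_reduced_basis[OF assms(1)] by blast
  have "(M *v u1) \<bullet> cross3 (M *v u2) (M *v u3) = 1"
  proof -
    have "(M *v x) \<bullet> w = x \<bullet> (transpose M *v w)" for x w
      by (simp add: inner_vec_def matrix_vector_mult_def transpose_def sum_3 algebra_simps)
    then show ?thesis
      using cross_matrix_mult[of M u2 u3] u(4) assms(1) by simp
  qed
  moreover have "u1 \<noteq> 0"
    using u(4) by auto
  ultimately have short: "norm (M *v u) \<le> 3/\<delta>^2" if "u \<in> {u1, u2, u3}" for u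
    using reduced_triple_norm_le[OF red _ \<delta> no_short[OF u(1)]] that by auto
  have U: "columns3 u1 u2 u3 \<in> SL3Z"
    using u by (rule columns3_SL3Z)
  then have "det (M ** columns3 u1 u2 u3) = 1"
    using assms(1) unfolding SL3Z_def by (simp add: det_mul)
  moreover have "\<bar>(M ** columns3 u1 u2 u3) $ i $ j\<bar> \<le> 3/\<delta>^2" for i j
    unfolding matrix_mult_columns3
    using component_le_norm_cart short[OF vector3_nth_cases] order_trans by blast
  ultimately show ?thesis
    using U unfolding SL3R_box_def by blast
qed

lemma compact_SL3R_box: "compact (SL3R_box R)"
proof -
  have "SL3R_box R = {h. det h = 1} \<inter> (\<Inter>i. \<Inter>j. {h :: mat3. \<bar>h $ i $ j\<bar> \<le> R})"
    unfolding SL3R_box_def by auto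
  moreover have "closed {h :: mat3. det h = 1}"
    unfolding det_3 by (intro closed_Collect_eq continuous_intros)
  ultimately have "closed (SL3R_box R)"
    by (auto intro!: closed_Int closed_INT closed_Collect_le continuous_intros)
  moreover have "norm h \<le> 9 * R" if "h \<in> SL3R_box R" for h
  proof -
    have "norm h \<le> (\<Sum>i \<in> UNIV. norm (h $ i))"
      unfolding norm_vec_def by (rule L2_set_le_sum) simp
    also have "\<dots> \<le> (\<Sum>i \<in> (UNIV :: 3 set). \<Sum>j \<in> (UNIV :: 3 set). R)"
      using that unfolding SL3R_box_def
      by (intro sum_mono order_trans[OF norm_le_l1_cart]) auto
    finally show ?thesis
      by simp
  qed
  then have "bounded (SL3R_box R)"
    unfolding bounded_iff by blast
  ultimately show ?thesis
    by (simp add: compact_eq_bounded_closed)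
qed

lemma openin_X_top:
  "openin X_top U \<longleftrightarrow> U \<subseteq> Xspace \<and> openin (top_of_set SL3R) {g \<in> SL3R. coset g \<in> U}"
  unfolding X_top_def topology_inverse'[OF istopology_X_top] ..

lemma topspace_X_top: "topspace X_top = Xspace"
proof -
  have "{g \<in> SL3R. coset g \<in> coset ` SL3R} = topspace (top_of_set SL3R)"
    by auto
  then have "openin X_top Xspace"
    unfolding openin_X_top Xspace_def by (simp del: topspace_euclidean_subtopology)
  then show ?thesis
    using openin_subset[of X_top Xspace] unfolding topspace_def openin_X_top by auto
qed

lemma continuous_map_coset: "continuous_map (top_of_set SL3R) X_top coset"
  unfolding continuous_map_def topspace_X_top openin_X_top Xspace_def by auto

lemma compactin_coset_SL3R_box: "compactin X_top (coset ` SL3R_box R)"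
proof (rule image_compactin[OF _ continuous_map_coset])
  have "SL3R_box R \<subseteq> SL3R"
    unfolding SL3R_box_def SL3R_def by auto
  then show "compactin (top_of_set SL3R) (SL3R_box R)"
    using compact_SL3R_box by (simp add: compactin_subtopology compactin_euclidean_iff)
qed

section \<open>Measuring sets of times\<close>

definition cut_triangle :: "real \<Rightarrow> real \<Rightarrow> real \<Rightarrow> (real \<times> real) set" where
  "cut_triangle a b c = {p. fst p \<le> a \<and> snd p \<le> b \<and> c \<le> fst p + snd p}"

lemma sets_cut_triangle: "cut_triangle a b c \<in> sets lborel"
proof -
  have "closed (cut_triangle a b c)"
    unfolding cut_triangle_def by (intro closed_Collect_conj closed_Collect_le continuous_intros)
  then show ?thesis
    by (simp add: borel_closed)
qed

lemma emeasure_cut_triangle: "emeasure lborel (cut_triangle a b c) = ennreal ((max 0 (a + b - c))^2 / 2)"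
proof -
  define L where "L = c - b"
  have slice: "emeasure lborel (Pair x -` cut_triangle a b c) = ennreal (indicator {L..a} x * (x - L))" for x
  proof (cases "x \<le> a")
    case True
    then have "Pair x -` cut_triangle a b c = {c - x..b}"
      unfolding cut_triangle_def by auto
    then show ?thesis
      using True unfolding L_def by (auto simp: indicator_def)
  next
    case False
    then have "Pair x -` cut_triangle a b c = {}"
      unfolding cut_triangle_def by auto
    then show ?thesis
      using False by (simp add: indicator_def)
  qed
  have "cut_triangle a b c \<in> sets (lborel \<Otimes>\<^sub>M lborel)"
    unfolding lborel_prod by (rule sets_cut_triangle)
  then have "emeasure lborel (cut_triangle a b c) = (\<integral>\<^sup>+ x. emeasure lborel (Pair x -` cut_triangle a b c) \<partial>lborel)"
    unfolding lborel_prod[symmetric] by (rule lborel.emeasure_pair_measure_alt)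
  also have "\<dots> = (\<integral>\<^sup>+ x. ennreal (indicator {L..a} x * (x - L)) \<partial>lborel)"
    unfolding slice ..
  also have "\<dots> = ennreal ((max 0 (a + b - c))^2 / 2)"
  proof (cases "L \<le> a")
    case True
    have "((\<lambda>x. (x - L)^2 / 2) has_vector_derivative (x - L)) (at x within {L..a})" for x
      unfolding has_real_derivative_iff_has_vector_derivative[symmetric]
      by (auto intro!: derivative_eq_intros simp: power2_eq_square field_simps)
    then have "((\<lambda>x. x - L) has_integral ((a - L)^2 / 2)) {L..a}"
      using fundamental_theorem_of_calculus[OF True, of "\<lambda>x. (x - L)^2 / 2" "\<lambda>x. x - L"] by simp
    then show ?thesis
      using True nn_integral_has_integral_lebesgue[of "{L..a}" "\<lambda>x. x - L"] unfolding L_def by auto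
  next
    case False
    then show ?thesis
      unfolding L_def by (simp add: indicator_def)
  qed
  finally show ?thesis .
qed

lemma measure_cut_triangle: "measure lborel (cut_triangle a b c) = (max 0 (a + b - c))^2 / 2"
  unfolding measure_def emeasure_cut_triangle by simp

lemma emeasure_square: "0 \<le> T \<Longrightarrow> emeasure lborel ({0..T} \<times> {0..T}) = ennreal (T^2)"
  using lborel.emeasure_pair_measure_Times[of "{0..T}" lborel "{0..T :: real}"]
  by (simp add: lborel_prod ennreal_mult' power2_eq_square)

lemma countable_SL3Z: "countable SL3Z"
proof (rule countable_subset)
  show "SL3Z \<subseteq> range (\<lambda>f :: 3 \<Rightarrow> 3 \<Rightarrow> int. \<chi> i j. of_int (f i j))"
  proof
    fix g assume "g \<in> SL3Z"
    then have "g = (\<chi> i j. of_int \<lfloor>g $ i $ j\<rfloor>)"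
      unfolding SL3Z_def by (simp add: vec_eq_iff)
    then show "g \<in> range (\<lambda>f :: 3 \<Rightarrow> 3 \<Rightarrow> int. \<chi> i j. of_int (f i j))"
      by (rule image_eqI[where x = "\<lambda>i j. \<lfloor>g $ i $ j\<rfloor>"]) simp
  qed
qed simp

lemma continuous_on_a_st_mult: "continuous_on UNIV (\<lambda>p :: real \<times> real. a_st (fst p) (snd p) ** B)"
proof -
  have "a_st s t = (\<chi> i j. if i = j then (if i = 1 then exp (- s - t) else if i = 2 then exp s else exp t) else 0)"
    for s t
    by (simp add: vec_eq_iff forall_3 a_st_def)
  then have entry: "continuous_on UNIV (\<lambda>p :: real \<times> real. a_st (fst p) (snd p) $ i $ k)" for i k
    by (cases "i = k"; cases "i = 1"; cases "i = 2") (auto intro!: continuous_intros)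
  show ?thesis
    unfolding matrix_matrix_mult_def
    by (intro continuous_on_vec_lambda continuous_on_sum continuous_on_mult entry continuous_on_const)
qed

lemma sets_visits:
  assumes "closed C"
  shows "{p \<in> {0..T} \<times> {0..T}. act (a_st (fst p) (snd p)) (coset g) \<in> coset ` C} \<in> sets lborel"
proof -
  have "{p \<in> {0..T} \<times> {0..T}. act (a_st (fst p) (snd p)) (coset g) \<in> coset ` C} =
      ({0..T} \<times> {0..T}) \<inter> (\<Union>U \<in> SL3Z. (\<lambda>p. a_st (fst p) (snd p) ** (g ** U)) -` C)"
    by (auto simp: act_coset coset_in_image_iff matrix_mul_assoc)
  also have "\<dots> \<in> sets lborel"
    using closed_vimage[OF assms continuous_on_a_st_mult]
    by (intro sets.Int sets.countable_UN'' countable_SL3Z) (auto simp: borel_closed closed_Times)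
  finally show ?thesis .
qed

section \<open>The diagonal orbit of \<open>\<tau>\<^sub>\<alpha>\<^sub>,\<^sub>\<beta> \<Gamma>\<close>\<close>

lemma a_st_tau_mult: "(a_st s t ** tau \<alpha> \<beta>) *v u =
   vector [exp (- s - t) * u $ 1, exp s * (\<alpha> * u $ 1 + u $ 2), exp t * (\<beta> * u $ 1 + u $ 3)]"
  by (simp add: vec_eq_iff forall_3 a_st_def tau_def matrix_matrix_mult_def matrix_vector_mult_def
      sum_3 algebra_simps)

lemma det_a_st_tau: "det (a_st s t ** tau \<alpha> \<beta>) = 1"
proof -
  have "det (a_st s t) = exp (- s - t) * exp s * exp t"
    by (simp add: a_st_def det_3)
  also have "\<dots> = 1"
    by (simp add: exp_add[symmetric])
  finally have "det (a_st s t) = 1" .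
  moreover have "det (tau \<alpha> \<beta>) = 1"
    by (simp add: tau_def det_3)
  ultimately show ?thesis
    by (simp add: det_mul)
qed

lemma dni_nonneg: "0 \<le> dni x"
  unfolding dni_def by simp

lemma dni_le: "dni x \<le> \<bar>x - of_int j\<bar>"
  unfolding dni_def by (rule round_diff_minimal)

lemma dni_abs_mult_le: "dni (\<bar>of_int m\<bar> * x) \<le> \<bar>of_int m * x + of_int j\<bar>"
proof (cases "0 \<le> m")
  case True
  then show ?thesis
    using dni_le[of "of_int m * x" "- j"] by simp
next
  case False
  then show ?thesis
    using dni_le[of "- (of_int m * x)" j] by (simp add: abs_minus_commute)
qed

lemma dni_of_nat_mult_le: "dni (real k * x) \<le> real k * dni x"
proof -
  have "dni (real k * x) \<le> \<bar>real k * x - of_int (int k * round x)\<bar>"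
    by (rule dni_le)
  also have "\<dots> = \<bar>real k * (x - of_int (round x))\<bar>"
    by (simp add: algebra_simps)
  also have "\<dots> = real k * dni x"
    unfolding dni_def abs_mult by simp
  finally show ?thesis .
qed

lemma short_orbit_vector_approximation:
  assumes "0 \<le> s" "0 \<le> t" "\<delta> \<le> 1" and u: "u \<in> Ints_vec" "u \<noteq> 0"
    and short: "norm ((a_st s t ** tau \<alpha> \<beta>) *v u) < \<delta>"
  obtains n :: nat where "1 \<le> n" "real n < \<delta> * exp (s + t)"
    "dni (real n * \<alpha>) * exp s < \<delta>" "dni (real n * \<beta>) * exp t < \<delta>"
proof -
  have "u $ i \<in> \<int>" for i
    using u(1) unfolding Ints_vec_def by simp
  then obtain m1 m2 m3 where m: "u $ 1 = of_int m1" "u $ 2 = of_int m2" "u $ 3 = of_int m3"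
    by (meson Ints_cases)
  have "\<bar>((a_st s t ** tau \<alpha> \<beta>) *v u) $ i\<bar> < \<delta>" for i
    using component_le_norm_cart[of _ i] short by (rule le_less_trans)
  from this[of 1] this[of 2] this[of 3]
  have c1: "\<bar>of_int m1\<bar> * exp (- s - t) < \<delta>"
    and c2: "\<bar>of_int m1 * \<alpha> + of_int m2\<bar> * exp s < \<delta>"
    and c3: "\<bar>of_int m1 * \<beta> + of_int m3\<bar> * exp t < \<delta>"
    unfolding a_st_tau_mult m by (simp_all add: abs_mult mult.commute)
  have "m1 \<noteq> 0"
  proof
    assume "m1 = 0"
    then have "\<bar>of_int m2\<bar> * exp s < 1" "\<bar>of_int m3\<bar> * exp t < 1"
      using c2 c3 assms(3) by simp_all
    moreover have "1 \<le> exp s" "1 \<le> exp t"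
      using assms(1,2) by simp_all
    ultimately have "\<bar>of_int m2\<bar> < (1::real)" "\<bar>of_int m3\<bar> < (1::real)"
      by (meson abs_ge_zero le_less_trans mult_le_cancel_left1 not_le)+
    then have "m2 = 0" "m3 = 0"
      by linarith+
    then have "u = 0"
      using m \<open>m1 = 0\<close> by (simp add: vec_eq_iff forall_3)
    then show False
      using u(2) by simp
  qed
  define n where "n = nat \<bar>m1\<bar>"
  have n: "real n = \<bar>of_int m1\<bar>" "1 \<le> n"
    unfolding n_def using \<open>m1 \<noteq> 0\<close> by auto
  have "real n < \<delta> * exp (s + t)"
    using c1 n(1) by (simp add: exp_diff exp_minus exp_add field_simps)
  moreover have "dni (real n * \<alpha>) * exp s < \<delta>" "dni (real n * \<beta>) * exp t < \<delta>"
    using le_less_trans[OF mult_right_mono[OF dni_abs_mult_le] c2]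
      le_less_trans[OF mult_right_mono[OF dni_abs_mult_le] c3]
    unfolding n(1) by simp_all
  ultimately show ?thesis
    using that n(2) by blast
qed

section \<open>Counting good denominators\<close>

definition littlewood_set :: "real \<Rightarrow> real \<Rightarrow> real \<Rightarrow> real \<Rightarrow> nat set" where
  "littlewood_set T \<epsilon> \<alpha> \<beta> =
     {n. 1 \<le> n \<and> real n < exp (2 * T) \<and> real n * dni (real n * \<alpha>) * dni (real n * \<beta>) < \<epsilon>}"

lemma finite_littlewood_set: "finite (littlewood_set T \<epsilon> \<alpha> \<beta>)"
proof (rule finite_subset)
  show "littlewood_set T \<epsilon> \<alpha> \<beta> \<subseteq> {..nat \<lceil>exp (2 * T)\<rceil>}"
    unfolding littlewood_set_def by (auto intro!: nat_le_real_less[THEN iffD2]) linarith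
qed simp

text \<open>For \<open>x > 0\<close>, \<open>exit_time T \<epsilon> x\<close> is the time \<open>s\<close> at which \<open>x e\<^sup>s\<close> grows beyond \<open>\<epsilon>\<close>,
  capped at \<open>T\<close>; for \<open>x = 0\<close> it is \<open>T\<close> itself.\<close>
definition exit_time :: "real \<Rightarrow> real \<Rightarrow> real \<Rightarrow> real" where
  "exit_time T \<epsilon> x = (if x = 0 then T else min T (ln (\<epsilon> / x)))"

lemma le_exit_time:
  assumes "0 \<le> x" "0 < \<epsilon>" "s \<le> T" "x * exp s < \<epsilon>"
  shows "s \<le> exit_time T \<epsilon> x"
proof (cases "x = 0")
  case False
  then have "exp s < \<epsilon> / x"
    using assms by (simp add: field_simps)
  then have "ln (exp s) < ln (\<epsilon> / x)"
    using assms False by (subst ln_less_cancel_iff) auto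
  then have "s < ln (\<epsilon> / x)"
    by simp
  then show ?thesis
    using assms False unfolding exit_time_def by simp
qed (use assms in \<open>simp add: exit_time_def\<close>)

lemma exit_time_le: "exit_time T \<epsilon> x \<le> T"
  and exit_time_le_ln: "x \<noteq> 0 \<Longrightarrow> exit_time T \<epsilon> x \<le> ln (\<epsilon> / x)"
  unfolding exit_time_def by auto

text \<open>The times \<open>(s, t)\<close> at which the vector \<open>(e\<^sup>-\<^sup>s\<^sup>-\<^sup>t n, e\<^sup>s \<langle>n\<alpha>\<rangle>, e\<^sup>t \<langle>n\<beta>\<rangle>)\<close>
  of the lattice \<open>a\<^sub>s\<^sub>,\<^sub>t \<tau> \<int>\<^sup>3\<close> is \<open>\<epsilon>\<close>-short lie in this triangle.\<close>
definition approx_triangle :: "real \<Rightarrow> real \<Rightarrow> real \<Rightarrow> real \<Rightarrow> nat \<Rightarrow> (real \<times> real) set" where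
  "approx_triangle T \<epsilon> \<alpha> \<beta> n =
     cut_triangle (exit_time T \<epsilon> (dni (real n * \<alpha>))) (exit_time T \<epsilon> (dni (real n * \<beta>))) (ln (real n / \<epsilon>))"

lemma approximation_in_littlewood_set:
  assumes \<epsilon>: "0 < \<epsilon>" "\<epsilon> \<le> 1" and st: "0 \<le> s" "s \<le> T" "0 \<le> t" "t \<le> T"
    and n: "1 \<le> n" "real n < \<epsilon> * exp (s + t)"
      "dni (real n * \<alpha>) * exp s < \<epsilon>" "dni (real n * \<beta>) * exp t < \<epsilon>"
  shows "n \<in> littlewood_set T \<epsilon> \<alpha> \<beta>" "(s, t) \<in> approx_triangle T \<epsilon> \<alpha> \<beta> n"
proof -
  have "real n < exp (2 * T)"
    using n(2) \<epsilon> st mult_mono[of \<epsilon> 1 "exp (s + t)" "exp (2 * T)"] by simp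
  moreover have "real n * dni (real n * \<alpha>) * dni (real n * \<beta>) < \<epsilon>"
  proof -
    have "real n * dni (real n * \<alpha>) * dni (real n * \<beta>) * (exp s * exp t)
        = real n * (dni (real n * \<alpha>) * exp s) * (dni (real n * \<beta>) * exp t)"
      by (simp add: algebra_simps)
    also have "\<dots> \<le> real n * \<epsilon> * \<epsilon>"
      using n \<epsilon> by (intro mult_mono mult_left_mono) (auto simp: dni_nonneg less_imp_le)
    also have "\<dots> < \<epsilon> * exp (s + t) * \<epsilon> * \<epsilon>"
      using n \<epsilon> by (intro mult_strict_right_mono) auto
    finally have "real n * dni (real n * \<alpha>) * dni (real n * \<beta>) < \<epsilon>^3"
      by (simp add: exp_add power3_eq_cube algebra_simps)
    also have "\<epsilon>^3 \<le> \<epsilon>^1"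
      using \<epsilon> by (intro power_decreasing) auto
    finally show ?thesis
      by simp
  qed
  ultimately show "n \<in> littlewood_set T \<epsilon> \<alpha> \<beta>"
    unfolding littlewood_set_def using n(1) by simp
  have "real n / \<epsilon> < exp (s + t)"
    using n(2) \<epsilon> by (simp add: field_simps)
  then have "ln (real n / \<epsilon>) < ln (exp (s + t))"
    using n(1) \<epsilon> by (subst ln_less_cancel_iff) auto
  then show "(s, t) \<in> approx_triangle T \<epsilon> \<alpha> \<beta> n"
    using le_exit_time[OF dni_nonneg \<epsilon>(1) st(2) n(3)] le_exit_time[OF dni_nonneg \<epsilon>(1) st(4) n(4)]
    unfolding approx_triangle_def cut_triangle_def by simp
qed

lemma escape_in_approx_triangle:
  assumes \<epsilon>: "0 < \<epsilon>" "\<epsilon> \<le> 1" and p: "p \<in> {0..T} \<times> {0..T}"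
    and escaped: "act (a_st (fst p) (snd p)) (coset (tau \<alpha> \<beta>)) \<notin> coset ` SL3R_box (3/\<epsilon>^2)"
  shows "\<exists>n \<in> littlewood_set T \<epsilon> \<alpha> \<beta>. p \<in> approx_triangle T \<epsilon> \<alpha> \<beta> n"
proof -
  obtain s t where st: "p = (s, t)" "0 \<le> s" "s \<le> T" "0 \<le> t" "t \<le> T"
    using p by auto
  define g where "g = a_st s t ** tau \<alpha> \<beta>"
  have "\<not> (\<exists>U \<in> SL3Z. g ** U \<in> SL3R_box (3/\<epsilon>^2))"
    using escaped unfolding st g_def act_coset coset_in_image_iff by simp
  then obtain u where u: "u \<in> Ints_vec" "u \<noteq> 0" "norm (g *v u) < \<epsilon>"
    using mahler_reduction[OF det_a_st_tau \<epsilon>] unfolding g_def by (meson not_le)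
  obtain n :: nat where "1 \<le> n" "real n < \<epsilon> * exp (s + t)"
    "dni (real n * \<alpha>) * exp s < \<epsilon>" "dni (real n * \<beta>) * exp t < \<epsilon>"
    using short_orbit_vector_approximation[OF st(2,4) \<epsilon>(2) u[unfolded g_def]] by blast
  then show ?thesis
    using approximation_in_littlewood_set[OF \<epsilon> st(2-5)] unfolding st(1) by blast
qed

lemma square_le_visits_add_triangles:
  assumes "0 \<le> T" "0 < \<epsilon>" "\<epsilon> \<le> 1"
  shows "T^2 \<le> measure lborel {p \<in> {0..T} \<times> {0..T}.
                  act (a_st (fst p) (snd p)) (coset (tau \<alpha> \<beta>)) \<in> coset ` SL3R_box (3/\<epsilon>^2)}
           + (\<Sum>n \<in> littlewood_set T \<epsilon> \<alpha> \<beta>. measure lborel (approx_triangle T \<epsilon> \<alpha> \<beta> n))"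
proof -
  define V where "V = {p \<in> {0..T} \<times> {0..T}.
      act (a_st (fst p) (snd p)) (coset (tau \<alpha> \<beta>)) \<in> coset ` SL3R_box (3/\<epsilon>^2)}"
  define S where "S = littlewood_set T \<epsilon> \<alpha> \<beta>"
  define W where "W = (\<Union>n \<in> S. approx_triangle T \<epsilon> \<alpha> \<beta> n)"
  have V: "V \<in> sets lborel"
    unfolding V_def by (intro sets_visits compact_imp_closed compact_SL3R_box)
  have triangles: "approx_triangle T \<epsilon> \<alpha> \<beta> n \<in> sets lborel" for n
    unfolding approx_triangle_def by (rule sets_cut_triangle)
  have S: "finite S"
    unfolding S_def by (rule finite_littlewood_set)
  then have W: "W \<in> sets lborel"
    unfolding W_def using triangles by blast
  have "{0..T} \<times> {0..T} \<subseteq> V \<union> W"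
    unfolding V_def W_def S_def using escape_in_approx_triangle[OF assms(2,3)] by blast
  then have "ennreal (T^2) \<le> emeasure lborel (V \<union> W)"
    using emeasure_mono[of _ "V \<union> W" lborel] V W emeasure_square[OF assms(1)] by (metis sets.Un)
  also have "\<dots> \<le> emeasure lborel V + emeasure lborel W"
    using V W by (rule emeasure_subadditive)
  also have "emeasure lborel W \<le> (\<Sum>n \<in> S. emeasure lborel (approx_triangle T \<epsilon> \<alpha> \<beta> n))"
    unfolding W_def using S triangles by (intro emeasure_subadditive_finite) auto
  also have "\<dots> = ennreal (\<Sum>n \<in> S. measure lborel (approx_triangle T \<epsilon> \<alpha> \<beta> n))"
    unfolding approx_triangle_def emeasure_cut_triangle measure_cut_triangle by (rule sum_ennreal) simp
  also have "emeasure lborel V = ennreal (measure lborel V)"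
  proof (rule emeasure_eq_ennreal_measure)
    have "emeasure lborel V \<le> emeasure lborel ({0..T} \<times> {0..T})"
      unfolding V_def by (intro emeasure_mono) (auto simp: borel_closed closed_Times)
    then show "emeasure lborel V \<noteq> top"
      using emeasure_square[OF assms(1)] by (auto simp: top_unique)
  qed
  finally have "ennreal (T^2)
      \<le> ennreal (measure lborel V + (\<Sum>n \<in> S. measure lborel (approx_triangle T \<epsilon> \<alpha> \<beta> n)))"
    by (simp add: ennreal_plus sum_nonneg)
  then show ?thesis
    unfolding V_def[symmetric] S_def[symmetric]
    by (subst (asm) ennreal_le_iff) (auto intro!: add_nonneg_nonneg sum_nonneg)
qed

lemma wide_approx_triangle_bounds:
  assumes T: "1 \<le> T" and \<epsilon>: "0 < \<epsilon>" and n: "1 \<le> n"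
    and wide: "6 * ln T < exit_time T \<epsilon> (dni (real n * \<alpha>)) + exit_time T \<epsilon> (dni (real n * \<beta>)) - ln (real n / \<epsilon>)"
  shows "real n * T^6 < \<epsilon> * exp (2 * T)"
    and "real n * dni (real n * \<alpha>) * dni (real n * \<beta>) * T^6 < \<epsilon>^3"
proof -
  define da where "da = dni (real n * \<alpha>)"
  define db where "db = dni (real n * \<beta>)"
  have T6: "T^6 = exp (6 * ln T)"
    using T by (simp add: exp_of_nat_mult[of 6, simplified])
  have "ln (real n / \<epsilon>) < 2 * T - 6 * ln T"
    using wide exit_time_le[of T \<epsilon>] by (smt (verit))
  then have "real n / \<epsilon> < exp (2 * T) / T^6"
    using n \<epsilon>
    by (metis T6 exp_diff exp_less_cancel_iff exp_ln divide_pos_pos of_nat_0_less_iff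
        less_le_trans zero_less_one)
  then show "real n * T^6 < \<epsilon> * exp (2 * T)"
    using \<epsilon> T by (simp add: field_simps)
  show "real n * dni (real n * \<alpha>) * dni (real n * \<beta>) * T^6 < \<epsilon>^3"
  proof (cases "da = 0 \<or> db = 0")
    case True
    then show ?thesis
      unfolding da_def db_def using \<epsilon> by auto
  next
    case False
    then have "0 < da" "0 < db"
      unfolding da_def db_def using dni_nonneg by (auto simp: less_le)
    have "6 * ln T < ln (\<epsilon> / da) + ln (\<epsilon> / db) - ln (real n / \<epsilon>)"
      using wide exit_time_le_ln[of da T \<epsilon>] exit_time_le_ln[of db T \<epsilon>] False
      unfolding da_def db_def by linarith
    also have "\<dots> = ln (\<epsilon>^3 / (real n * da * db))"
      using \<open>0 < da\<close> \<open>0 < db\<close> n \<epsilon> by (simp add: ln_div ln_mult power3_eq_cube)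
    finally have "T^6 < \<epsilon>^3 / (real n * da * db)"
      unfolding T6 using \<open>0 < da\<close> \<open>0 < db\<close> n \<epsilon>
      by (metis exp_less_cancel_iff exp_ln divide_pos_pos mult_pos_pos of_nat_0_less_iff
          less_le_trans zero_less_one zero_less_power)
    then show ?thesis
      using \<open>0 < da\<close> \<open>0 < db\<close> n unfolding da_def db_def by (simp add: field_simps)
  qed
qed

lemma multiple_in_littlewood_set:
  assumes T: "1 \<le> T" and \<epsilon>: "0 < \<epsilon>" "\<epsilon> \<le> 1" and n: "1 \<le> n" and k: "1 \<le> k" "real k \<le> T^2"
    and n_small: "real n * T^6 < \<epsilon> * exp (2 * T)"
    and prod_small: "real n * dni (real n * \<alpha>) * dni (real n * \<beta>) * T^6 < \<epsilon>^3"
  shows "k * n \<in> littlewood_set T \<epsilon> \<alpha> \<beta>"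
proof -
  have "T^2 \<le> T^6"
    using T by (intro power_increasing) auto
  then have k6: "real k \<le> T^6" "real k ^ 3 \<le> T^6"
    using k(2) power_mono[of "real k" "T^2" 3] by (simp_all add: power_mult[symmetric])
  have "real (k * n) \<le> T^6 * real n"
    using k6(1) by (simp add: mult_right_mono)
  also have "\<dots> < exp (2 * T)"
    using n_small \<epsilon> by (smt (verit) exp_gt_zero mult.commute mult_left_le_one_le)
  finally have "real (k * n) < exp (2 * T)" .
  moreover have "real (k * n) * dni (real (k * n) * \<alpha>) * dni (real (k * n) * \<beta>) < \<epsilon>"
  proof -
    have "real (k * n) * dni (real (k * n) * \<alpha>) * dni (real (k * n) * \<beta>)
        \<le> real (k * n) * (real k * dni (real n * \<alpha>)) * (real k * dni (real n * \<beta>))"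
      using dni_of_nat_mult_le[of k "real n * \<alpha>"] dni_of_nat_mult_le[of k "real n * \<beta>"]
      by (intro mult_mono mult_left_mono) (auto simp: dni_nonneg mult.assoc)
    also have "\<dots> = real k ^ 3 * (real n * dni (real n * \<alpha>) * dni (real n * \<beta>))"
      by (simp add: power3_eq_cube algebra_simps)
    also have "\<dots> \<le> T^6 * (real n * dni (real n * \<alpha>) * dni (real n * \<beta>))"
      using k6(2) by (intro mult_right_mono) (auto simp: dni_nonneg)
    also have "\<dots> < \<epsilon>^3"
      using prod_small by (simp add: mult.commute)
    also have "\<dots> \<le> \<epsilon>^1"
      using \<epsilon> by (intro power_decreasing) auto
    finally show ?thesis
      by simp
  qed
  ultimately show ?thesis
    unfolding littlewood_set_def using k(1) n by simp
qed

lemma measure_approx_triangle_le: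
  assumes "0 \<le> L"
    and "exit_time T \<epsilon> (dni (real n * \<alpha>)) + exit_time T \<epsilon> (dni (real n * \<beta>)) - ln (real n / \<epsilon>) \<le> L"
  shows "measure lborel (approx_triangle T \<epsilon> \<alpha> \<beta> n) \<le> L^2 / 2"
  unfolding approx_triangle_def measure_cut_triangle using assms by (auto intro: power_mono)

lemma card_littlewood_set_ge:
  assumes T: "1 \<le> T" and \<epsilon>: "0 < \<epsilon>" "\<epsilon> \<le> 1" and n: "n \<in> littlewood_set T \<epsilon> \<alpha> \<beta>"
    and wide: "6 * ln T < exit_time T \<epsilon> (dni (real n * \<alpha>)) + exit_time T \<epsilon> (dni (real n * \<beta>)) - ln (real n / \<epsilon>)"
  shows "T^2 - 1 \<le> real (card (littlewood_set T \<epsilon> \<alpha> \<beta>))"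
proof -
  define N where "N = nat \<lfloor>T^2\<rfloor>"
  have n1: "1 \<le> n"
    using n unfolding littlewood_set_def by auto
  have "k * n \<in> littlewood_set T \<epsilon> \<alpha> \<beta>" if "k \<in> {1..N}" for k
  proof (rule multiple_in_littlewood_set[OF T \<epsilon> n1 _ _ wide_approx_triangle_bounds[OF T \<epsilon>(1) n1 wide]])
    show "1 \<le> k"
      using that by simp
    show "real k \<le> T^2"
      using that unfolding N_def by (simp add: le_nat_floor) linarith
  qed
  moreover have "inj_on (\<lambda>k. k * n) {1..N}"
    using n1 by (auto simp: inj_on_def)
  ultimately have "card {1..N} \<le> card (littlewood_set T \<epsilon> \<alpha> \<beta>)"
    by (intro card_inj_on_le[OF _ _ finite_littlewood_set]) auto
  then have "real N \<le> real (card (littlewood_set T \<epsilon> \<alpha> \<beta>))"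
    by simp
  moreover have "T^2 - 1 \<le> real N"
    unfolding N_def by linarith
  ultimately show ?thesis
    by linarith
qed

lemma escape_le_card_littlewood_set:
  assumes T: "3 \<le> T" and \<epsilon>: "0 < \<epsilon>" "\<epsilon> \<le> 1"
  shows "1 - emp_measure T (coset (tau \<alpha> \<beta>)) (coset ` SL3R_box (3/\<epsilon>^2))
           \<le> 18 * ((ln T)^2 / T^2 * real (card (littlewood_set T \<epsilon> \<alpha> \<beta>)))"
    (is "1 - ?emp \<le> 18 * (_ * real (card ?S))")
proof -
  have "exp 1 \<le> T"
    using exp_le T by linarith
  then have lnT: "1 \<le> ln T"
    using ln_ge_iff[of T 1] T by simp
  have "0 \<le> ?emp"
    unfolding emp_measure_def by simp
  show ?thesis
  proof (cases "\<exists>n \<in> ?S. 6 * ln T < exit_time T \<epsilon> (dni (real n * \<alpha>)) + exit_time T \<epsilon> (dni (real n * \<beta>)) - ln (real n / \<epsilon>)")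
    case True
    then have "T^2 - 1 \<le> real (card ?S)"
      using card_littlewood_set_ge[of T \<epsilon>] T \<epsilon> by auto
    moreover have "9 \<le> T^2"
      using T power_mono[of 3 T 2] by simp
    ultimately have "T^2 \<le> 18 * real (card ?S)"
      by linarith
    then have "1 \<le> 18 * (real (card ?S) / T^2)"
      using T by (simp add: field_simps)
    also have "\<dots> \<le> 18 * ((ln T)^2 * (real (card ?S) / T^2))"
      using mult_right_mono[OF one_le_power[OF lnT, of 2], of "real (card ?S) / T^2"] by simp
    finally show ?thesis
      using \<open>0 \<le> ?emp\<close> by simp
  next
    case False
    have "measure lborel (approx_triangle T \<epsilon> \<alpha> \<beta> n) \<le> 18 * (ln T)^2" if "n \<in> ?S" for n
      using measure_approx_triangle_le[of "6 * ln T"] False that lnT by (force simp: power_mult_distrib)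
    then have "(\<Sum>n \<in> ?S. measure lborel (approx_triangle T \<epsilon> \<alpha> \<beta> n)) \<le> real (card ?S) * (18 * (ln T)^2)"
      using sum_bounded_above by (metis (no_types, lifting))
    moreover have "T^2 \<le> ?emp * T^2 + (\<Sum>n \<in> ?S. measure lborel (approx_triangle T \<epsilon> \<alpha> \<beta> n))"
      using square_le_visits_add_triangles[of T \<epsilon> \<alpha> \<beta>] T \<epsilon> unfolding emp_measure_def by simp
    ultimately have "(1 - ?emp) * T^2 \<le> 18 * ((ln T)^2 * real (card ?S))"
      by (simp add: algebra_simps)
    then show ?thesis
      using T by (simp add: field_simps)
  qed
qed

lemma liminf_ge_of_limsup_le:
  fixes f g :: "nat \<Rightarrow> real"
  assumes "limsup (\<lambda>k. ereal (f k)) \<le> ereal a"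
    and "eventually (\<lambda>k. b - f k \<le> c * g k) sequentially" and "0 < c"
  shows "ereal ((b - a) / c) \<le> liminf (\<lambda>k. ereal (g k))"
proof (subst le_Liminf_iff, intro allI impI)
  fix y assume "y < ereal ((b - a) / c)"
  then obtain r where r: "y < ereal r" "r < (b - a) / c"
    using ereal_dense2 by (metis less_ereal.simps(1))
  then have "limsup (\<lambda>k. ereal (f k)) < ereal (b - c * r)"
    using assms(1,3) by (simp add: field_simps le_less_trans)
  then have "eventually (\<lambda>k. f k < b - c * r) sequentially"
    by (auto dest: Limsup_lessD)
  then show "eventually (\<lambda>k. y < ereal (g k)) sequentially"
    using assms(2)
  proof eventually_elim
    case (elim k)
    then have "r < g k"
      using assms(3) by (smt (verit) mult_less_cancel_left_pos)
    then have "ereal r < ereal (g k)"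
      by simp
    with r(1) show ?case
      by (rule less_trans)
  qed
qed

theorem theorem1p10:
  fixes \<gamma> \<alpha> \<beta> :: real and T :: "nat \<Rightarrow> real"
  assumes "0 < \<gamma>" and "\<gamma> < 1"
    and "\<And>k. T k > 0"
    and "filterlim T at_top sequentially"
    and "\<And>K. compactin X_top K \<Longrightarrow>
           limsup (\<lambda>k. ereal (emp_measure (T k) (coset (tau \<alpha> \<beta>)) K)) \<le> ereal (1 - \<gamma>)"
  shows "\<forall>\<epsilon>. 0 < \<epsilon> \<and> \<epsilon> < 1/2 \<longrightarrow>
           liminf (\<lambda>k. ereal ((ln (T k))^2 / (T k)^2 *
              real (card {n :: nat. 1 \<le> n \<and> real n < exp (2 * T k) \<and>
                                   real n * dni (real n * \<alpha>) * dni (real n * \<beta>) < \<epsilon>})))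
             \<ge> ereal (\<gamma> / 18)"
proof (intro allI impI)
  fix \<epsilon> :: real assume \<epsilon>: "0 < \<epsilon> \<and> \<epsilon> < 1/2"
  let ?K = "coset ` SL3R_box (3/\<epsilon>^2)"
  have "limsup (\<lambda>k. ereal (emp_measure (T k) (coset (tau \<alpha> \<beta>)) ?K)) \<le> ereal (1 - \<gamma>)"
    using assms(5) compactin_coset_SL3R_box by blast
  moreover have "eventually (\<lambda>k. 3 \<le> T k) sequentially"
    using assms(4) by (simp add: filterlim_at_top)
  then have "eventually (\<lambda>k. 1 - emp_measure (T k) (coset (tau \<alpha> \<beta>)) ?K
      \<le> 18 * ((ln (T k))^2 / (T k)^2 * real (card (littlewood_set (T k) \<epsilon> \<alpha> \<beta>)))) sequentially"
    by eventually_elim (use \<epsilon> escape_le_card_littlewood_set in auto)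
  ultimately have "ereal ((1 - (1 - \<gamma>)) / 18)
      \<le> liminf (\<lambda>k. ereal ((ln (T k))^2 / (T k)^2 * real (card (littlewood_set (T k) \<epsilon> \<alpha> \<beta>))))"
    by (rule liminf_ge_of_limsup_le) simp
  then show "liminf (\<lambda>k. ereal ((ln (T k))^2 / (T k)^2 *
              real (card {n :: nat. 1 \<le> n \<and> real n < exp (2 * T k) \<and>
                                   real n * dni (real n * \<alpha>) * dni (real n * \<beta>) < \<epsilon>})))
             \<ge> ereal (\<gamma> / 18)"
    unfolding littlewood_set_def by simp
qed

end
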